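(* Let $\gamma\in\mathbb C$ and $H_1(\gamma)=I-\gamma D$. Then $$(n!)^{1/n}|\gamma|\le K_h\bigl(H_1(\gamma)^{-1}\bigr)\le n|\gamma|.$$
   Context: Let $n\ge1$ and $\mathcal P_n$ the complex vector space of polynomials in one complex variable of degree at most $n$; $D$ is differentiation and $I$ the identity on $\mathcal P_n$ ($I-\gamma D$ is invertible). For nonzero $f$, $Z(f)$ is the multiset of roots of $f$ (with multiplicity; empty for nonzero constants); $Z(0)=\mathbb C$. For finite nonempty $A,B\subset\mathbb C$, $d_h(A,B)=\max_{y\in B}\min_{x\in A}|x-y|$, with conventions $d_h(\emptyset,\emptyset)=0$, $d_h(A,\emptyset)=d_h(\emptyset,A)=+\infty$ for $A\ne\emptyset$, and $d_h(A,B)=0$ if one of $A,B$ equals $\mathbb C$ and the other is nonempty. $K_h(T)=\sup_{f\in\mathcal P_n}d_h(Z(f),Z(Tf))$. *)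

theory Defs
  imports "HOL-Computational_Algebra.Polynomial" "HOL-Library.Extended_Real"
begin

definition Pn :: "nat \<Rightarrow> complex poly set" where
  "Pn n = {p. degree p \<le> n}"

definition H1 :: "complex \<Rightarrow> complex poly \<Rightarrow> complex poly" where
  "H1 \<gamma> f = f - smult \<gamma> (pderiv f)"

definition H1inv :: "nat \<Rightarrow> complex \<Rightarrow> complex poly \<Rightarrow> complex poly" where
  "H1inv n \<gamma> = the_inv_into (Pn n) (H1 \<gamma>)"

text \<open>Zero set Z(f); the whole plane for f = 0 (multiplicities irrelevant for d_h).\<close>
definition Z :: "complex poly \<Rightarrow> complex set" where
  "Z f = {x. poly f x = 0}"

definition dh :: "complex set \<Rightarrow> complex set \<Rightarrow> ereal" where
  "dh A B = (if A = {} \<and> B = {} then 0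
             else if A = {} \<or> B = {} then \<infinity>
             else if A = UNIV \<or> B = UNIV then 0
             else (SUP y\<in>B. INF x\<in>A. ereal (cmod (x - y))))"

definition Kh :: "nat \<Rightarrow> (complex poly \<Rightarrow> complex poly) \<Rightarrow> ereal" where
  "Kh n T = (SUP f\<in>Pn n. dh (Z f) (Z (T f)))"

end

theory Submission
  imports Defs "HOL-Computational_Algebra.Fundamental_Theorem_Algebra"
begin

text \<open>
  The upper bound holds root by root. Let \<open>g = H\<^sub>1(\<gamma>)\<^sup>-\<^sup>1 f\<close>, let \<open>y\<close> be a root of \<open>g\<close>,
  \<open>k = deg g\<close>, and put \<open>G(t) = g(y + \<gamma> t)\<close>, so that \<open>f(y + \<gamma> t) = p(t) := G(t) - G'(t)\<close>.
  Telescoping gives \<open>\<Sum>\<^sub>j j! p\<^sub>j = G(0) = 0\<close>, i.e. \<open>p\<close> is apolar to the Taylor polynomial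
  \<open>E\<^sub>k\<close> of \<open>e\<^sup>-\<^sup>t\<close> of degree \<open>k\<close>. The roots of \<open>E\<^sub>k\<close> lie in the closed disc of radius \<open>k\<close>
  by the Enestrom-Kakeya theorem (after the substitution \<open>t = -k s\<close> its coefficients
  \<open>k\<^sup>i/i!\<close> are nondecreasing), so by Grace's theorem, obtained here by iterating Laguerre's
  theorem on polar derivatives, \<open>p\<close> has a root in that disc: \<open>f\<close> has a root within
  \<open>k|\<gamma>|\<close> of \<open>y\<close>.

  For the lower bound take \<open>f = x\<^sup>n\<close>. Then \<open>g = \<Sum>\<^sub>j \<gamma>\<^sup>j D\<^sup>j f\<close> is monic with
  \<open>g(0) = n! \<gamma>\<^sup>n\<close>, so some root of \<open>g\<close> has modulus at least \<open>(n!)\<^sup>1\<^sup>/\<^sup>n |\<gamma>|\<close>,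
  while \<open>Z(f) = {0}\<close>.
\<close>

section \<open>The Enestrom-Kakeya theorem and the truncated exponential\<close>

lemma one_minus_mult_sum_power:
  fixes b :: "nat \<Rightarrow> real" and y :: "'a::real_normed_field"
  shows "(1 - y) * (\<Sum>i\<le>k. of_real (b i) * y ^ i) =
    of_real (b 0) + (\<Sum>i<k. of_real (b (Suc i) - b i) * y ^ Suc i) - of_real (b k) * y ^ Suc k"
  by (induction k) (simp_all add: algebra_simps)

theorem enestrom_kakeya:
  fixes b :: "nat \<Rightarrow> real" and y :: "'a::real_normed_field"
  assumes b0: "b 0 > 0" and mono: "\<And>i. i < k \<Longrightarrow> b i \<le> b (Suc i)"
    and root: "(\<Sum>i\<le>k. of_real (b i) * y ^ i) = 0"
  shows "norm y \<le> 1"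
proof (rule ccontr)
  assume "\<not> norm y \<le> 1"
  then have r: "norm y > 1" by simp
  have "b 0 \<le> b k" by (rule lift_Suc_mono_le_ivl[of "{..<k}"]) (use mono in auto)
  with b0 have bk: "b k > 0" by linarith
  have eq: "of_real (b k) * y ^ Suc k = of_real (b 0) + (\<Sum>i<k. of_real (b (Suc i) - b i) * y ^ Suc i)"
    using one_minus_mult_sum_power[of y b k] root by simp
  have "b k * norm y ^ Suc k = norm (of_real (b k) * y ^ Suc k)"
    using bk by (simp add: norm_mult norm_power)
  also have "\<dots> \<le> b 0 + (\<Sum>i<k. (b (Suc i) - b i) * norm y ^ Suc i)"
    unfolding eq using b0 mono
    by (intro order_trans[OF norm_triangle_ineq] add_mono order_trans[OF norm_sum] sum_mono)
       (simp_all add: norm_mult norm_power abs_of_nonneg flip: of_real_diff)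
  also have "\<dots> \<le> b 0 * norm y ^ k + (\<Sum>i<k. (b (Suc i) - b i) * norm y ^ k)"
    using b0 mono r
    by (intro add_mono sum_mono mult_left_mono power_increasing) (simp_all add: one_le_power)
  also have "\<dots> = b k * norm y ^ k"
    by (simp only: sum_distrib_right[symmetric] sum_lessThan_telescope) (simp add: algebra_simps)
  also have "\<dots> < b k * norm y ^ Suc k"
    using bk r by (intro mult_strict_left_mono power_strict_increasing) auto
  finally show False by simp
qed

definition neg_exp_taylor :: "nat \<Rightarrow> complex poly" where
  "neg_exp_taylor k = (\<Sum>i\<le>k. monom ((-1) ^ i / fact i) i)"

lemma coeff_neg_exp_taylor:
  "coeff (neg_exp_taylor k) i = (if i \<le> k then (-1) ^ i / fact i else 0)"
  by (simp add: neg_exp_taylor_def coeff_sum coeff_monom)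

lemma degree_neg_exp_taylor: "degree (neg_exp_taylor k) = k"
  by (intro antisym degree_le le_degree) (simp_all add: coeff_neg_exp_taylor)

lemma neg_exp_taylor_root_bound:
  assumes "poly (neg_exp_taylor k) x = 0" "k \<ge> 1"
  shows "cmod x \<le> real k"
proof -
  define b where "b i = real k ^ i / fact i" for i
  define y where "y = (-1) * x / of_nat k"
  have "of_real (b i) * y ^ i = (-1) ^ i / fact i * x ^ i" for i
  proof -
    have "y ^ i = (-1) ^ i * x ^ i / of_nat k ^ i"
      unfolding y_def power_divide power_mult_distrib ..
    then show ?thesis
      using assms(2) by (simp add: b_def)
  qed
  then have "(\<Sum>i\<le>k. of_real (b i) * y ^ i) = poly (neg_exp_taylor k) x"
    by (simp add: neg_exp_taylor_def poly_sum poly_monom)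
  with assms(1) have "(\<Sum>i\<le>k. of_real (b i) * y ^ i) = 0"
    by simp
  moreover have "b i \<le> b (Suc i)" if "i < k" for i
  proof -
    have "b i * 1 \<le> b i * (real k / real (Suc i))"
      using that by (intro mult_left_mono) (simp_all add: b_def)
    also have "\<dots> = b (Suc i)"
      by (simp add: b_def field_simps)
    finally show ?thesis by simp
  qed
  ultimately have "norm y \<le> 1"
    by (intro enestrom_kakeya[of b k y]) (simp_all add: b_def)
  moreover have "norm y = cmod x / real k"
    by (simp add: y_def norm_divide norm_mult)
  ultimately show ?thesis
    using assms(2) by (simp add: divide_le_eq)
qed

section \<open>Polar derivatives and the theorems of Laguerre and Grace\<close>

definition polar_deriv :: "nat \<Rightarrow> complex \<Rightarrow> complex poly \<Rightarrow> complex poly" where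
  "polar_deriv M \<zeta> p = smult (of_nat M) p + [:\<zeta>, -1:] * pderiv p"

fun iter_polar_deriv :: "(nat \<Rightarrow> complex) \<Rightarrow> nat \<Rightarrow> complex poly \<Rightarrow> complex poly" where
  "iter_polar_deriv z 0 p = p"
| "iter_polar_deriv z (Suc m) p = iter_polar_deriv z m (polar_deriv (Suc m) (z m) p)"

text \<open>For \<open>p = \<Sum> p\<^sub>j x\<^sup>j\<close>, \<open>q = \<Sum> q\<^sub>j x\<^sup>j\<close> of formal degree \<open>m\<close> this is \<open>m!\<close> times the classical
  apolar invariant \<open>\<Sum>\<^sub>j (-1)\<^sup>j p\<^sub>j q\<^sub>m\<^sub>-\<^sub>j / (m choose j)\<close>.\<close>

definition apolar :: "nat \<Rightarrow> complex poly \<Rightarrow> complex poly \<Rightarrow> complex" where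
  "apolar m p q = (\<Sum>j\<le>m. fact j * fact (m - j) * (-1) ^ j * coeff p j * coeff q (m - j))"

lemma coeff_polar_deriv:
  "coeff (polar_deriv M \<zeta> p) j =
     (of_nat M - of_nat j) * coeff p j + \<zeta> * of_nat (Suc j) * coeff p (Suc j)"
  by (cases j) (simp_all add: polar_deriv_def coeff_pderiv coeff_pCons algebra_simps)

lemma degree_polar_deriv:
  assumes "degree p \<le> Suc m"
  shows "degree (polar_deriv (Suc m) \<zeta> p) \<le> m"
proof (rule degree_le, intro allI impI)
  fix i assume "m < i"
  then have "coeff p (Suc i) = 0" "i = Suc m \<or> coeff p i = 0"
    using assms by (auto intro: coeff_eq_0)
  then show "coeff (polar_deriv (Suc m) \<zeta> p) i = 0"
    by (auto simp: coeff_polar_deriv)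
qed

lemma apolar_smult_right: "apolar m p (smult c q) = c * apolar m p q"
  by (simp add: apolar_def sum_distrib_left mult_ac)

lemma coeff_linear_mult:
  fixes W :: "'a::comm_ring_1 poly"
  shows "coeff ([:-\<zeta>, 1:] * W) i = (if i = 0 then 0 else coeff W (i - 1)) - \<zeta> * coeff W i"
  by (cases i) (simp_all add: coeff_pCons algebra_simps)

lemma apolar_polar_deriv:
  assumes "degree W \<le> m"
  shows "apolar m (polar_deriv (Suc m) \<zeta> p) W = apolar (Suc m) p ([:-\<zeta>, 1:] * W)"
proof -
  define c where "c j = fact j * fact (m - j) * (-1) ^ j * coeff W (m - j)" for j
  define t where "t j = fact j * fact (Suc m - j) * (-1) ^ j * coeff p j" for j
  have "apolar m (polar_deriv (Suc m) \<zeta> p) W = (\<Sum>j\<le>m. c j * coeff (polar_deriv (Suc m) \<zeta> p) j)"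
    by (simp add: apolar_def c_def mult_ac)
  also have "\<dots> = (\<Sum>j\<le>m. c j * (of_nat (Suc m) - of_nat j) * coeff p j)
      + \<zeta> * (\<Sum>j\<le>m. c j * of_nat (Suc j) * coeff p (Suc j))"
    by (simp only: coeff_polar_deriv distrib_left sum.distrib sum_distrib_left mult_ac)
  also have "(\<Sum>j\<le>m. c j * (of_nat (Suc m) - of_nat j) * coeff p j) =
      (\<Sum>j\<le>Suc m. t j * (if Suc m - j = 0 then 0 else coeff W (Suc m - j - 1)))"
  proof -
    have "fact (Suc m - j) = (of_nat (Suc m) - of_nat j) * (fact (m - j) :: complex)" if "j \<le> m" for j
      using that by (simp add: Suc_diff_le of_nat_diff)
    then show ?thesis
      by (auto simp: c_def t_def Suc_diff_le intro!: sum.cong)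
  qed
  also have "(\<Sum>j\<le>m. c j * of_nat (Suc j) * coeff p (Suc j)) =
      - (\<Sum>j\<le>Suc m. t j * coeff W (Suc m - j))"
  proof -
    have "coeff W (Suc m) = 0"
      using assms by (simp add: coeff_eq_0)
    then have "(\<Sum>j\<le>Suc m. t j * coeff W (Suc m - j)) = (\<Sum>j\<le>m. t (Suc j) * coeff W (m - j))"
      by (subst sum.atMost_Suc_shift) simp
    also have "\<dots> = - (\<Sum>j\<le>m. c j * of_nat (Suc j) * coeff p (Suc j))"
      unfolding sum_negf[symmetric] by (intro sum.cong) (simp_all add: t_def c_def algebra_simps)
    finally show ?thesis by simp
  qed
  also have "(\<Sum>j\<le>Suc m. t j * (if Suc m - j = 0 then 0 else coeff W (Suc m - j - 1)))
      + \<zeta> * - (\<Sum>j\<le>Suc m. t j * coeff W (Suc m - j)) = apolar (Suc m) p ([:-\<zeta>, 1:] * W)"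
    unfolding apolar_def t_def[symmetric] coeff_linear_mult right_diff_distrib sum_subtractf
    by (simp add: sum_distrib_left mult.left_commute algebra_simps)
  finally show ?thesis .
qed

lemma degree_prod_linear_le: "degree (\<Prod>i<m. [:-z i, 1:]) \<le> m"
  using degree_prod_sum_le[of "{..<m}" "\<lambda>i. [:-z i, 1:]"] by simp

lemma iter_polar_deriv_eq_apolar:
  "degree p \<le> m \<Longrightarrow> iter_polar_deriv z m p = [:apolar m p (\<Prod>i<m. [:-z i, 1:]):]"
proof (induction m arbitrary: p)
  case 0
  then show ?case by (auto simp: apolar_def elim!: degree_eq_zeroE)
next
  case (Suc m)
  then show ?case
    by (simp add: Suc.IH degree_polar_deriv apolar_polar_deriv degree_prod_linear_le mult.commute)
qed

lemma poly_pderiv_prod_linear: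
  fixes r :: "nat \<Rightarrow> complex"
  assumes "\<And>i. i < d \<Longrightarrow> w \<noteq> r i"
  shows "poly (pderiv (\<Prod>i<d. [:-r i, 1:])) w = poly (\<Prod>i<d. [:-r i, 1:]) w * (\<Sum>i<d. 1 / (w - r i))"
  using assms
proof (induction d)
  case (Suc d)
  define P where "P = (\<Prod>i<d. [:-r i, 1:])"
  have "pderiv [:-r d, 1:] = 1"
    by (simp add: pderiv_pCons)
  then have step: "pderiv (P * [:-r d, 1:]) = P + pderiv P * [:-r d, 1:]"
    by (simp only: pderiv_mult mult_1_left mult_1_right mult.commute)
  have "w - r d \<noteq> 0" "poly (pderiv P) w = poly P w * (\<Sum>i<d. 1 / (w - r i))"
    using Suc by (simp_all add: P_def)
  then show ?case
    unfolding prod.lessThan_Suc P_def[symmetric] step by (simp add: field_simps)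
qed simp

lemma norm_diff_square:
  fixes x y :: complex
  shows "cmod (x - y) ^ 2 = cmod x ^ 2 - 2 * Re (x * cnj y) + cmod y ^ 2"
  unfolding cmod_power2 by (simp add: power2_eq_square algebra_simps)

text \<open>Jensen's inequality for the concave function \<open>Q\<close>, applied to \<open>v 0, \<dots>, v (d - 1)\<close>
  padded with \<open>M - d\<close> zeros (where \<open>Q 0 = 1\<close>).\<close>

lemma quadratic_pos_at_mean:
  fixes v :: "nat \<Rightarrow> complex" and w V :: complex and a :: real
  defines "Q u \<equiv> a * cmod u ^ 2 - 2 * Re (w * u) + 1"
  assumes "d \<le> M" "1 \<le> M" and mean: "(\<Sum>i<d. v i) = of_nat M * V" and "a \<le> 0"
    and pos: "\<And>i. i < d \<Longrightarrow> Q (v i) > 0"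
  shows "Q V > 0"
proof -
  define S2 where "S2 = (\<Sum>i<d. cmod (v i) ^ 2)"
  have "0 \<le> (\<Sum>i<d. cmod (v i - V) ^ 2)"
    by (simp add: sum_nonneg)
  also have "\<dots> = S2 - 2 * Re ((\<Sum>i<d. v i) * cnj V) + d * cmod V ^ 2"
    by (simp add: norm_diff_square S2_def sum_subtractf sum.distrib sum_distrib_left sum_distrib_right Re_sum)
  also have "(\<Sum>i<d. v i) * cnj V = of_real (M * cmod V ^ 2)"
    using mean by (simp add: mult.assoc complex_mult_cnj cmod_power2)
  also have "real d * cmod V ^ 2 \<le> real M * cmod V ^ 2"
    using assms(2) by (intro mult_right_mono) auto
  finally have S2: "M * cmod V ^ 2 \<le> S2"
    by simp
  have "0 < (\<Sum>i<d. Q (v i)) + (M - d)"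
    using pos assms(2,3) by (cases "d = 0") (auto intro!: add_pos_nonneg sum_pos)
  also have "(\<Sum>i<d. Q (v i)) = a * S2 - 2 * Re (w * (\<Sum>i<d. v i)) + d"
    by (simp add: Q_def S2_def sum_subtractf sum.distrib sum_distrib_left Re_sum)
  also have "a * S2 \<le> a * (M * cmod V ^ 2)"
    using S2 assms(5) by (rule mult_left_mono_neg)
  finally have "0 < M * Q V"
    using mean assms(2) by (simp add: Q_def of_nat_diff algebra_simps)
  then show ?thesis
    using assms(3) by (simp add: zero_less_mult_iff)
qed

text \<open>The left-hand side is \<open>Q (1 / (w - u))\<close> for the \<open>Q\<close> above with \<open>a = |w|\<^sup>2 - R\<^sup>2\<close>:
  so \<open>u \<mapsto> 1 / (w - u)\<close> maps the exterior of the disc of radius \<open>R\<close> into \<open>Q > 0\<close> and the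
  disc itself into \<open>Q \<le> 0\<close>. This drives Laguerre's theorem.\<close>

lemma quadratic_at_inverse_diff:
  fixes w u :: complex and R :: real
  assumes "w \<noteq> u"
  shows "(cmod w ^ 2 - R ^ 2) * cmod (1 / (w - u)) ^ 2 - 2 * Re (w * (1 / (w - u))) + 1
        = (cmod u ^ 2 - R ^ 2) * cmod (1 / (w - u)) ^ 2"
proof -
  define v where "v = 1 / (w - u)"
  have "w * v - 1 = u * v"
    using assms by (simp add: v_def field_simps)
  then have "cmod (w * v - 1) ^ 2 = cmod u ^ 2 * cmod v ^ 2"
    by (simp add: norm_mult power_mult_distrib)
  moreover have "cmod (w * v - 1) ^ 2 = cmod w ^ 2 * cmod v ^ 2 - 2 * Re (w * v) + 1"
    by (simp add: norm_diff_square norm_mult power_mult_distrib)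
  ultimately show ?thesis
    unfolding v_def[symmetric] by (simp add: algebra_simps)
qed

lemma polar_deriv_root_sum_inverse:
  fixes r :: "nat \<Rightarrow> complex"
  assumes "c \<noteq> 0" "\<And>i. i < d \<Longrightarrow> w \<noteq> r i" "M \<ge> 1"
    and "poly (polar_deriv M \<zeta> (smult c (\<Prod>i<d. [:-r i, 1:]))) w = 0"
  shows "w \<noteq> \<zeta>" "(\<Sum>i<d. 1 / (w - r i)) = of_nat M / (w - \<zeta>)"
proof -
  define P where "P = (\<Prod>i<d. [:-r i, 1:])"
  define S where "S = (\<Sum>i<d. 1 / (w - r i))"
  have "poly P w \<noteq> 0"
    using assms(2) by (simp add: P_def poly_prod)
  have "poly (pderiv P) w = poly P w * S"
    using assms(2) by (simp add: P_def S_def poly_pderiv_prod_linear)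
  then have "c * poly P w * (of_nat M + (\<zeta> - w) * S) = 0"
    using assms(4) by (simp add: P_def[symmetric] polar_deriv_def pderiv_smult algebra_simps)
  then have "of_nat M + (\<zeta> - w) * S = 0"
    using assms(1) \<open>poly P w \<noteq> 0\<close> by simp
  moreover from this show "w \<noteq> \<zeta>"
    using assms(3) by auto
  ultimately show "S = of_nat M / (w - \<zeta>)"
    by (simp add: field_simps)
qed

theorem laguerre_polar_deriv:
  fixes p :: "complex poly"
  assumes "p \<noteq> 0" "degree p \<le> Suc m" and roots: "\<And>u. poly p u = 0 \<Longrightarrow> R < cmod u"
    and "cmod \<zeta> \<le> R" "cmod w \<le> R"
  shows "poly (polar_deriv (Suc m) \<zeta> p) w \<noteq> 0"
proof
  assume polar_root: "poly (polar_deriv (Suc m) \<zeta> p) w = 0"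
  obtain r where r: "smult (lead_coeff p) (\<Prod>i<degree p. [:-r i, 1:]) = p"
    using complex_poly_decompose' by blast
  define d where "d = degree p"
  have R0: "R \<ge> 0"
    using assms(4) norm_ge_zero order_trans by blast
  have rR: "R < cmod (r i)" if "i < d" for i
    using that by (intro roots) (subst r[symmetric], force simp: d_def poly_prod)
  then have wr: "w \<noteq> r i" if "i < d" for i
    using that assms(5) by force
  define V where "V = 1 / (w - \<zeta>)"
  have "lead_coeff p \<noteq> 0" "1 \<le> Suc m"
    using assms(1) by simp_all
  moreover have "poly (polar_deriv (Suc m) \<zeta> (smult (lead_coeff p) (\<Prod>i<d. [:-r i, 1:]))) w = 0"
    using polar_root r by (simp add: d_def)
  ultimately have wz: "w \<noteq> \<zeta>" and SV: "(\<Sum>i<d. 1 / (w - r i)) = of_nat (Suc m) * V"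
    using polar_deriv_root_sum_inverse[of "lead_coeff p" d w r "Suc m" \<zeta>] wr by (simp_all add: V_def)
  define a where "a = cmod w ^ 2 - R ^ 2"
  have "a * cmod V ^ 2 - 2 * Re (w * V) + 1 > 0"
  proof (rule quadratic_pos_at_mean[OF _ _ SV])
    show "d \<le> Suc m" "a \<le> 0"
      using assms(2,5) R0 by (simp_all add: a_def d_def power_mono)
    fix i assume i: "i < d"
    have "R ^ 2 < cmod (r i) ^ 2" "cmod (1 / (w - r i)) > 0"
      using rR[OF i] R0 wr[OF i] by (simp_all add: power_strict_mono)
    then show "a * cmod (1 / (w - r i)) ^ 2 - 2 * Re (w * (1 / (w - r i))) + 1 > 0"
      using quadratic_at_inverse_diff[OF wr[OF i], of R] by (simp add: a_def)
  qed simp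
  moreover have "a * cmod V ^ 2 - 2 * Re (w * V) + 1 = (cmod \<zeta> ^ 2 - R ^ 2) * cmod V ^ 2"
    using quadratic_at_inverse_diff[OF wz, of R] by (simp add: a_def V_def)
  moreover have "(cmod \<zeta> ^ 2 - R ^ 2) * cmod V ^ 2 \<le> 0"
    using assms(4) R0 by (intro mult_nonpos_nonneg) (auto simp: power_mono)
  ultimately show False
    by simp
qed

lemma iter_polar_deriv_neq_0:
  assumes "p \<noteq> 0" "degree p \<le> m" "\<And>u. poly p u = 0 \<Longrightarrow> R < cmod u"
    and "\<And>i. i < m \<Longrightarrow> cmod (z i) \<le> R"
  shows "iter_polar_deriv z m p \<noteq> 0"
  using assms
proof (induction m arbitrary: p)
  case (Suc m)
  define q where "q = polar_deriv (Suc m) (z m) p"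
  have q_roots: "R < cmod u" if "poly q u = 0" for u
    using laguerre_polar_deriv[OF Suc.prems(1,2,3), of "z m" u] Suc.prems(4) that
    by (force simp: q_def)
  then have "q \<noteq> 0"
    using Suc.prems(4)[of m] by (metis lessI not_le poly_0)
  moreover have "degree q \<le> m"
    unfolding q_def by (rule degree_polar_deriv) (use Suc.prems(2) in simp)
  ultimately have "iter_polar_deriv z m q \<noteq> 0"
    using Suc.IH q_roots Suc.prems(4) by simp
  then show ?case
    by (simp add: q_def)
qed simp

theorem grace_apolar:
  fixes p q :: "complex poly"
  assumes "p \<noteq> 0" "degree p \<le> m" "degree q = m"
    and p_roots: "\<And>u. poly p u = 0 \<Longrightarrow> R < cmod u"
    and q_roots: "\<And>u. poly q u = 0 \<Longrightarrow> cmod u \<le> R"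
  shows "apolar m p q \<noteq> 0"
proof -
  have "q \<noteq> 0"
    using q_roots[of "of_real (\<bar>R\<bar> + 1)"] by auto
  obtain z where z: "smult (lead_coeff q) (\<Prod>i<degree q. [:-z i, 1:]) = q"
    using complex_poly_decompose' by blast
  have "cmod (z i) \<le> R" if "i < m" for i
    using that assms(3) by (intro q_roots) (subst z[symmetric], force simp: poly_prod)
  then have "iter_polar_deriv z m p \<noteq> 0"
    using iter_polar_deriv_neq_0[OF assms(1,2) p_roots] by blast
  then have "apolar m p (\<Prod>i<m. [:-z i, 1:]) \<noteq> 0"
    by (simp add: iter_polar_deriv_eq_apolar assms(2))
  with \<open>q \<noteq> 0\<close> show ?thesis
    by (subst z[symmetric]) (simp add: apolar_smult_right flip: assms(3))
qed

lemma apolar_neg_exp_taylor: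
  "apolar k p (neg_exp_taylor k) = (-1) ^ k * (\<Sum>j\<le>k. fact j * coeff p j)"
  unfolding apolar_def sum_distrib_left
proof (rule sum.cong[OF refl])
  fix j assume "j \<in> {..k}"
  then have "(-1 :: complex) ^ j * (-1) ^ (k - j) = (-1) ^ k"
    by (simp flip: power_add)
  then show "fact j * fact (k - j) * (-1) ^ j * coeff p j * coeff (neg_exp_taylor k) (k - j)
      = (-1) ^ k * (fact j * coeff p j)"
    by (simp add: coeff_neg_exp_taylor field_simps)
qed

section \<open>The operator \<open>I - \<gamma> D\<close> and its inverse\<close>

lemma sum_fact_coeff_diff_pderiv:
  fixes G :: "'a::{idom,ring_char_0} poly"
  assumes "degree G \<le> k"
  shows "(\<Sum>j\<le>k. fact j * coeff (G - pderiv G) j) = coeff G 0"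
proof -
  have "(\<Sum>j\<le>k. fact j * coeff (G - pderiv G) j) =
      (\<Sum>j<Suc k. fact j * coeff G j - fact (Suc j) * coeff G (Suc j))"
    by (intro sum.cong) (auto simp: coeff_pderiv algebra_simps)
  also have "\<dots> = coeff G 0 - fact (Suc k) * coeff G (Suc k)"
    using sum_lessThan_telescope'[of "\<lambda>j. fact j * coeff G j"] by simp
  also have "coeff G (Suc k) = 0"
    using assms by (simp add: coeff_eq_0)
  finally show ?thesis by simp
qed

lemma degree_H1: "degree (H1 \<gamma> h) = degree h"
proof (cases "degree h = 0")
  case True
  then have "pderiv h = 0"
    by (simp add: pderiv_eq_0_iff)
  then show ?thesis
    by (simp add: H1_def)
next
  case False
  then have "degree (- smult \<gamma> (pderiv h)) < degree h"
    by (simp add: degree_pderiv)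
  then show ?thesis
    unfolding H1_def diff_conv_add_uminus by (rule degree_add_eq_left)
qed

lemma lead_coeff_H1: "lead_coeff (H1 \<gamma> h) = lead_coeff h"
  unfolding degree_H1 by (simp add: H1_def coeff_pderiv coeff_eq_0)

lemma H1_eq_0_iff: "H1 \<gamma> h = 0 \<longleftrightarrow> h = 0"
  by (metis lead_coeff_H1 leading_coeff_0_iff)

lemma inj_H1: "inj (H1 \<gamma>)"
proof (rule injI)
  fix a b assume "H1 \<gamma> a = H1 \<gamma> b"
  moreover have "H1 \<gamma> (a - b) = H1 \<gamma> a - H1 \<gamma> b"
    by (simp add: H1_def pderiv_diff smult_diff_right)
  ultimately have "H1 \<gamma> (a - b) = 0"
    by simp
  then show "a = b"
    by (simp add: H1_eq_0_iff)
qed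

lemma smult_sum_right: "smult a (sum f S) = (\<Sum>i\<in>S. smult a (f i))"
  by (induction S rule: infinite_finite_induct) (simp_all add: smult_add_right)

lemma H1_sum_higher_pderiv:
  assumes "degree f \<le> n"
  shows "H1 \<gamma> (\<Sum>j\<le>n. smult (\<gamma> ^ j) ((pderiv ^^ j) f)) = f"
proof -
  define F where "F j = smult (\<gamma> ^ j) ((pderiv ^^ j) f)" for j
  have "F (Suc n) = 0"
    using assms by (simp add: F_def pderiv_eq_0_iff degree_higher_pderiv)
  have "smult \<gamma> (pderiv (\<Sum>j\<le>n. F j)) = (\<Sum>j\<le>n. F (Suc j))"
    using higher_pderiv_sum[of 1 F "{..n}"] by (simp add: F_def pderiv_smult smult_sum_right)
  then have "H1 \<gamma> (\<Sum>j\<le>n. F j) = (\<Sum>j<Suc n. F j - F (Suc j))"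
    by (simp add: H1_def sum_subtractf lessThan_Suc_atMost)
  also have "\<dots> = f"
    unfolding sum_lessThan_telescope' \<open>F (Suc n) = 0\<close> by (simp add: F_def)
  finally show ?thesis
    by (simp add: F_def)
qed

lemma H1inv_eq:
  assumes "degree f \<le> n"
  shows "H1inv n \<gamma> f = (\<Sum>j\<le>n. smult (\<gamma> ^ j) ((pderiv ^^ j) f))"
  unfolding H1inv_def
proof (rule the_inv_into_f_eq[OF inj_on_subset[OF inj_H1 subset_UNIV] H1_sum_higher_pderiv[OF assms]])
  show "(\<Sum>j\<le>n. smult (\<gamma> ^ j) ((pderiv ^^ j) f)) \<in> Pn n"
    using assms unfolding Pn_def
    by (intro CollectI degree_sum_le) (auto intro: order_trans[OF degree_smult_le] simp: degree_higher_pderiv)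
qed

lemma H1_H1inv: "degree f \<le> n \<Longrightarrow> H1 \<gamma> (H1inv n \<gamma> f) = f"
  by (simp add: H1inv_eq H1_sum_higher_pderiv)

lemma diff_pderiv_root_in_disc:
  fixes G :: "complex poly"
  assumes "degree G = k" "k \<ge> 1" "poly G 0 = 0"
  obtains t where "poly (G - pderiv G) t = 0" "cmod t \<le> real k"
proof -
  define p where "p = G - pderiv G"
  have "degree p = k"
    using assms(1) degree_H1[of 1 G] by (simp add: p_def H1_def)
  have "apolar k p (neg_exp_taylor k) = (-1) ^ k * coeff G 0"
    using assms(1) by (simp only: apolar_neg_exp_taylor p_def sum_fact_coeff_diff_pderiv order_refl)
  with assms(3) have "apolar k p (neg_exp_taylor k) = 0"
    by (simp add: poly_0_coeff_0)
  moreover have "apolar k p (neg_exp_taylor k) \<noteq> 0" if "\<And>t. poly p t = 0 \<Longrightarrow> real k < cmod t"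
  proof (rule grace_apolar[OF _ _ _ that])
    show "p \<noteq> 0" "degree p \<le> k" "degree (neg_exp_taylor k) = k"
      using \<open>degree p = k\<close> assms(2) by (auto simp: degree_neg_exp_taylor)
    show "cmod u \<le> real k" if "poly (neg_exp_taylor k) u = 0" for u
      using that assms(2) by (rule neg_exp_taylor_root_bound)
  qed
  ultimately show ?thesis
    using that by (force simp: p_def not_less)
qed

section \<open>Zero sets and the distance \<open>d\<^sub>h\<close>\<close>

lemma Z_eq_UNIV_iff: "Z p = UNIV \<longleftrightarrow> p = 0"
  by (auto simp: Z_def simp flip: poly_all_0_iff_0)

lemma Z_eq_empty_iff: "Z p = {} \<longleftrightarrow> p \<noteq> 0 \<and> degree p = 0"
proof
  assume "Z p = {}"
  then show "p \<noteq> 0 \<and> degree p = 0"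
    using fundamental_theorem_of_algebra[of p] by (auto simp: Z_def constant_degree)
qed (auto simp: Z_def elim!: degree_eq_zeroE)

lemma H1_root_near:
  fixes g :: "complex poly"
  assumes "poly g y = 0"
  obtains x where "poly (H1 \<gamma> g) x = 0" "cmod (x - y) \<le> real (degree g) * cmod \<gamma>"
proof (cases "\<gamma> = 0 \<or> g = 0")
  case True
  then show ?thesis
    using assms by (intro that[of y]) (auto simp: H1_def)
next
  case False
  define G where "G = pcompose g [:y, \<gamma>:]"
  have "degree g \<ge> 1"
    using False assms Z_eq_empty_iff[of g] by (auto simp: Z_def)
  moreover have "degree G = degree g"
    using False by (simp add: G_def degree_pcompose)
  moreover have "poly G 0 = 0"
    using assms by (simp add: G_def poly_pcompose)
  ultimately obtain t where t: "poly (G - pderiv G) t = 0" "cmod t \<le> real (degree g)"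
    by (metis diff_pderiv_root_in_disc)
  have "G - pderiv G = pcompose (H1 \<gamma> g) [:y, \<gamma>:]"
    by (simp add: G_def H1_def pcompose_diff pcompose_smult pderiv_pcompose pderiv_pCons)
  with t(1) have "poly (H1 \<gamma> g) (y + \<gamma> * t) = 0"
    by (simp add: poly_pcompose algebra_simps)
  moreover have "cmod (y + \<gamma> * t - y) \<le> real (degree g) * cmod \<gamma>"
    using t(2) by (simp add: norm_mult mult.commute mult_left_mono)
  ultimately show ?thesis
    by (rule that)
qed

lemma dh_le:
  assumes "A = {} \<longleftrightarrow> B = {}" "0 \<le> c" and near: "\<And>y. y \<in> B \<Longrightarrow> \<exists>x\<in>A. cmod (x - y) \<le> c"
  shows "dh A B \<le> ereal c"
proof -
  have "(SUP y\<in>B. INF x\<in>A. ereal (cmod (x - y))) \<le> ereal c"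
  proof (rule SUP_least)
    fix y assume "y \<in> B"
    with near obtain x where "x \<in> A" "cmod (x - y) \<le> c"
      by blast
    then show "(INF x\<in>A. ereal (cmod (x - y))) \<le> ereal c"
      by (intro INF_lower2) auto
  qed
  with assms(1,2) show ?thesis
    by (simp add: dh_def)
qed

lemma dh_ge:
  assumes "A \<noteq> {}" "A \<noteq> UNIV" "B \<noteq> UNIV" "y \<in> B" and far: "\<And>x. x \<in> A \<Longrightarrow> c \<le> cmod (x - y)"
  shows "ereal c \<le> dh A B"
proof -
  have "ereal c \<le> (INF x\<in>A. ereal (cmod (x - y)))"
    using far by (intro INF_greatest) simp
  also have "\<dots> \<le> (SUP y\<in>B. INF x\<in>A. ereal (cmod (x - y)))"
    using \<open>y \<in> B\<close> by (rule SUP_upper)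
  finally show ?thesis
    using assms(1-4) by (auto simp: dh_def)
qed

lemma dh_H1inv_le:
  assumes "f \<in> Pn n"
  shows "dh (Z f) (Z (H1inv n \<gamma> f)) \<le> ereal (real n * cmod \<gamma>)"
proof -
  define g where "g = H1inv n \<gamma> f"
  have "degree f \<le> n"
    using assms by (simp add: Pn_def)
  then have f: "f = H1 \<gamma> g"
    by (simp add: g_def H1_H1inv)
  show ?thesis
    unfolding g_def[symmetric]
  proof (rule dh_le)
    show "Z f = {} \<longleftrightarrow> Z g = {}"
      by (simp add: f Z_eq_empty_iff H1_eq_0_iff degree_H1)
    fix y assume "y \<in> Z g"
    then obtain x where "poly f x = 0" "cmod (x - y) \<le> real (degree g) * cmod \<gamma>"
      unfolding f Z_def using H1_root_near by blast
    moreover have "real (degree g) * cmod \<gamma> \<le> real n * cmod \<gamma>"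
      using \<open>degree f \<le> n\<close> by (intro mult_right_mono) (simp_all add: f degree_H1)
    ultimately show "\<exists>x\<in>Z f. cmod (x - y) \<le> real n * cmod \<gamma>"
      by (force simp: Z_def)
  qed simp
qed

lemma exists_root_norm_ge:
  fixes p :: "complex poly"
  assumes "degree p \<ge> 1"
  obtains r where "poly p r = 0" "cmod (poly p 0) \<le> cmod (lead_coeff p) * cmod r ^ degree p"
proof -
  obtain z where z: "smult (lead_coeff p) (\<Prod>i<degree p. [:-z i, 1:]) = p"
    using complex_poly_decompose' by blast
  define d where "d = degree p"
  define M where "M = Max ((\<lambda>j. cmod (z j)) ` {..<d})"
  have "M \<in> (\<lambda>j. cmod (z j)) ` {..<d}"
    using assms unfolding M_def d_def by (intro Max_in) (auto simp: lessThan_empty_iff)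
  then obtain i where i: "i < d" "cmod (z i) = M"
    by auto
  have max: "cmod (z j) \<le> cmod (z i)" if "j < d" for j
    using that i(2) by (simp add: M_def)
  have "poly p (z i) = 0"
    using i(1) by (subst z[symmetric]) (force simp: poly_prod d_def)
  moreover have "cmod (poly p 0) = cmod (lead_coeff p) * (\<Prod>j<d. cmod (z j))"
    by (subst z[symmetric]) (simp add: poly_prod norm_mult d_def flip: prod_norm)
  moreover have "(\<Prod>j<d. cmod (z j)) \<le> cmod (z i) ^ d"
    using prod_mono[of "{..<d}" "\<lambda>j. cmod (z j)" "\<lambda>_. cmod (z i)"] max by simp
  ultimately show ?thesis
    by (intro that) (auto simp: d_def intro: mult_left_mono)
qed

lemma dh_H1inv_monom_ge:
  assumes "n \<ge> 1"
  shows "ereal (fact n powr (1 / real n) * cmod \<gamma>) \<le> dh (Z (monom 1 n)) (Z (H1inv n \<gamma> (monom 1 n)))"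
proof -
  define g where "g = H1inv n \<gamma> (monom 1 n)"
  define \<rho> where "\<rho> = fact n powr (1 / real n) * cmod \<gamma>"
  have monom_n: "degree (monom (1 :: complex) n) \<le> n"
    by (simp add: degree_monom_le)
  then have g: "H1 \<gamma> g = monom 1 n"
    by (simp add: g_def H1_H1inv)
  have "degree g = n" "lead_coeff g = 1"
    using degree_H1[of \<gamma> g] lead_coeff_H1[of \<gamma> g] by (simp_all add: g degree_monom_eq)
  moreover have "poly g 0 = \<gamma> ^ n * fact n"
    using monom_n by (simp add: g_def H1inv_eq poly_0_coeff_0 coeff_sum coeff_higher_pderiv
        coeff_monom pochhammer_fact if_distrib sum.delta' cong: if_cong)
  ultimately obtain r where r: "poly g r = 0" "cmod \<gamma> ^ n * fact n \<le> cmod r ^ n"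
    using exists_root_norm_ge[of g] assms by (auto simp: norm_mult norm_power)
  have "\<rho> ^ n = fact n * cmod \<gamma> ^ n"
    using assms by (simp add: \<rho>_def power_mult_distrib powr_power)
  with r(2) have "\<rho> ^ n \<le> cmod r ^ n"
    by (simp add: mult.commute)
  then have "\<rho> \<le> cmod r"
    using assms by (simp add: \<rho>_def)
  moreover have "Z (monom 1 n) = {0}"
    using assms by (auto simp: Z_def poly_monom)
  moreover have "Z g \<noteq> UNIV" "Z (monom 1 n) \<noteq> UNIV"
    using \<open>lead_coeff g = 1\<close> by (auto simp: Z_eq_UNIV_iff)
  moreover have "r \<in> Z g"
    using r(1) by (simp add: Z_def)
  ultimately show ?thesis
    unfolding g_def[symmetric] \<rho>_def[symmetric] by (intro dh_ge) auto
qed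

theorem mainTheorem17:
  fixes n :: nat and \<gamma> :: complex
  assumes "n \<ge> 1"
  shows "ereal (fact n powr (1 / real n) * cmod \<gamma>) \<le> Kh n (H1inv n \<gamma>)
       \<and> Kh n (H1inv n \<gamma>) \<le> ereal (real n * cmod \<gamma>)"
proof
  have "monom 1 n \<in> Pn n"
    by (simp add: Pn_def degree_monom_le)
  then have "dh (Z (monom 1 n)) (Z (H1inv n \<gamma> (monom 1 n))) \<le> Kh n (H1inv n \<gamma>)"
    unfolding Kh_def by (rule SUP_upper)
  with dh_H1inv_monom_ge[OF assms] show "ereal (fact n powr (1 / real n) * cmod \<gamma>) \<le> Kh n (H1inv n \<gamma>)"
    by (rule order_trans)
  show "Kh n (H1inv n \<gamma>) \<le> ereal (real n * cmod \<gamma>)"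
    unfolding Kh_def by (rule SUP_least) (rule dh_H1inv_le)
qed

end
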